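(* Let $\alpha,\beta\ge1$. (i) For every $2\times2$ matrix $A$ with strictly positive entries and $R(A)=\alpha$, there exists a $2\times 2$ matrix $B$ with strictly positive entries and $R(B)=\beta$ such that $R(AB)=\Phi(\alpha,\beta)$. (ii) For every $2\times2$ matrix $B$ with strictly positive entries and $R(B)=\beta$, there exists a $2\times2$ matrix $A$ with strictly positive entries and $R(A)=\alpha$ such that $R(AB)=\Phi(\alpha,\beta)$.
   Context: For a $2\times2$ matrix $A=(a_{ij})$ with strictly positive entries, $F(A)=\frac{a_{11}a_{22}}{a_{12}a_{21}}$ and the distortion is $R(A)=\max\{F(A),1/F(A)\}$. The envelope function is $\Phi(\alpha,\beta)=\left(\frac{1+\sqrt{\alpha\beta}}{\sqrt{\alpha}+\sqrt{\beta}}\right)^2$. *)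

theory Defs
  imports "HOL-Analysis.Analysis"
begin

text \<open>2x2 real matrices are represented as real^2^2; entry a_ij is A $ i $ j with i,j in {1,2}.\<close>

definition pos_matrix :: "real^2^2 \<Rightarrow> bool" where
  "pos_matrix A \<longleftrightarrow> (\<forall>i j. A $ i $ j > 0)"

definition cross_ratio_F :: "real^2^2 \<Rightarrow> real" where
  "cross_ratio_F A = (A $ 1 $ 1 * A $ 2 $ 2) / (A $ 1 $ 2 * A $ 2 $ 1)"

definition distortion :: "real^2^2 \<Rightarrow> real" where
  "distortion A = max (cross_ratio_F A) (1 / cross_ratio_F A)"

definition Phi :: "real \<Rightarrow> real \<Rightarrow> real" where
  "Phi \<alpha> \<beta> = ((1 + sqrt (\<alpha> * \<beta>)) / (sqrt \<alpha> + sqrt \<beta>))^2"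

end

(* For A = [[a, b], [c, d]] with x = F(A), the right factor B = [[b, b], [a m, a m y]] has
   F(B) = y, and F(AB) = (1 + m)(1 + x m y) / ((1 + m y)(1 + x m)), which equals Phi x y at
   m = 1 / sqrt(x y). Taking y = beta or 1 / beta according as x = alpha or 1 / alpha gives
   part (i), since Phi(1/alpha, 1/beta) = Phi(alpha, beta). Part (ii) is part (i) for the
   transpose of B: transposition preserves F and reverses products, and Phi is symmetric. *)

theory Submission
  imports Defs
begin

definition mat2 :: "real \<Rightarrow> real \<Rightarrow> real \<Rightarrow> real \<Rightarrow> real^2^2" where
  "mat2 a b c d = vector [vector [a, b], vector [c, d]]"

lemma mat2_nth [simp]:
  "mat2 a b c d $ 1 $ 1 = a" "mat2 a b c d $ 1 $ 2 = b"
  "mat2 a b c d $ 2 $ 1 = c" "mat2 a b c d $ 2 $ 2 = d"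
  by (simp_all add: mat2_def)

lemma matrix_matrix_mult_nth_2:
  fixes A B :: "real^2^2"
  shows "(A ** B) $ 1 $ 1 = A$1$1 * B$1$1 + A$1$2 * B$2$1"
    "(A ** B) $ 1 $ 2 = A$1$1 * B$1$2 + A$1$2 * B$2$2"
    "(A ** B) $ 2 $ 1 = A$2$1 * B$1$1 + A$2$2 * B$2$1"
    "(A ** B) $ 2 $ 2 = A$2$1 * B$1$2 + A$2$2 * B$2$2"
  by (simp_all add: matrix_matrix_mult_def sum_2)

lemma pos_matrix_iff:
  "pos_matrix A \<longleftrightarrow> A$1$1 > 0 \<and> A$1$2 > 0 \<and> A$2$1 > 0 \<and> A$2$2 > 0"
  unfolding pos_matrix_def forall_2 by blast

lemma pos_matrix_transpose [simp]: "pos_matrix (transpose A) \<longleftrightarrow> pos_matrix A"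
  by (auto simp: pos_matrix_iff transpose_def)

lemma cross_ratio_F_transpose [simp]: "cross_ratio_F (transpose A) = cross_ratio_F A"
  by (simp add: cross_ratio_F_def transpose_def mult.commute)

lemma distortion_transpose [simp]: "distortion (transpose A) = distortion A"
  by (simp add: distortion_def)

lemma cross_ratio_F_pos: "pos_matrix A \<Longrightarrow> cross_ratio_F A > 0"
  by (simp add: pos_matrix_iff cross_ratio_F_def)

lemma max_inverse_ge_1:
  fixes z :: real
  assumes "z > 0"
  shows "max z (1 / z) \<ge> 1"
  using assms by (cases "z \<ge> 1") (auto simp: le_max_iff_disj)

lemma max_inverse_eq_iff:
  fixes z g :: real
  assumes "z > 0" and "g \<ge> 1"
  shows "max z (1 / z) = g \<longleftrightarrow> z = g \<or> z = 1 / g"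
proof (cases "z \<ge> 1")
  case True
  have "1 / z \<le> 1" "1 / g \<le> 1" using True assms by simp_all
  then have "1 / z \<le> z" and "z = 1 / g \<Longrightarrow> z = 1"
    using True by linarith+
  then show ?thesis by (auto simp: max_def)
next
  case False
  have "1 < 1 / z" using False assms by simp
  then have "z \<le> 1 / z" and "z \<noteq> g" using False assms by linarith+
  moreover have "z = 1 / g \<longleftrightarrow> 1 / z = g" using assms by (auto simp: field_simps)
  ultimately show ?thesis by (auto simp: max_def)
qed

lemma distortion_ge_1: "pos_matrix A \<Longrightarrow> distortion A \<ge> 1"
  unfolding distortion_def by (intro max_inverse_ge_1 cross_ratio_F_pos)

lemma distortion_eq_iff:
  assumes "pos_matrix A" and "g \<ge> 1"
  shows "distortion A = g \<longleftrightarrow> cross_ratio_F A = g \<or> cross_ratio_F A = 1 / g"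
  unfolding distortion_def using assms by (intro max_inverse_eq_iff cross_ratio_F_pos)

lemma Phi_commute: "Phi \<alpha> \<beta> = Phi \<beta> \<alpha>"
  by (simp add: Phi_def add.commute mult.commute)

lemma Phi_ge_1:
  assumes "\<alpha> \<ge> 1" and "\<beta> \<ge> 1"
  shows "Phi \<alpha> \<beta> \<ge> 1"
proof -
  have u: "sqrt \<alpha> \<ge> 1" and v: "sqrt \<beta> \<ge> 1" using assms by auto
  have "0 \<le> (sqrt \<alpha> - 1) * (sqrt \<beta> - 1)" using u v by simp
  then have "sqrt \<alpha> + sqrt \<beta> \<le> 1 + sqrt \<alpha> * sqrt \<beta>" by (simp add: algebra_simps)
  moreover have "0 < sqrt \<alpha> + sqrt \<beta>" using u v by linarith
  ultimately have "1 \<le> (1 + sqrt \<alpha> * sqrt \<beta>) / (sqrt \<alpha> + sqrt \<beta>)"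
    by (simp add: le_divide_eq_1_pos)
  then show ?thesis by (simp add: Phi_def real_sqrt_mult one_le_power)
qed

lemma Phi_inverse:
  assumes "\<alpha> > 0" and "\<beta> > 0"
  shows "Phi (1 / \<alpha>) (1 / \<beta>) = Phi \<alpha> \<beta>"
proof -
  define u v where "u = sqrt \<alpha>" and "v = sqrt \<beta>"
  have uv: "u > 0" "v > 0" using assms by (auto simp: u_def v_def)
  have "(1 + 1 / (u * v)) / (1 / u + 1 / v) = ((1 + u * v) / (u * v)) / ((u + v) / (u * v))"
    using uv by (simp add: field_simps)
  also have "\<dots> = (1 + u * v) / (u + v)" using uv by simp
  finally show ?thesis
    by (simp add: Phi_def u_def v_def real_sqrt_mult real_sqrt_divide)
qed

text \<open>For \<open>x, y > 1\<close> the left-hand side tends to \<open>1\<close> as \<open>m \<rightarrow> 0\<close> or \<open>m \<rightarrow> \<infinity>\<close>;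
  \<open>m = 1 / sqrt (x * y)\<close> is its maximiser, which is where the envelope \<open>Phi\<close> comes from.\<close>

lemma Phi_eq_cross_ratio_at_optimum:
  assumes "x > 0" and "y > 0" and m: "m = 1 / sqrt (x * y)"
  shows "(1 + m) * (1 + x * m * y) / ((1 + m * y) * (1 + x * m)) = Phi x y"
proof -
  define u v where "u = sqrt x" and "v = sqrt y"
  have uv: "u > 0" "v > 0" using assms by (auto simp: u_def v_def)
  have x: "x = u * u" and y: "y = v * v" using assms by (auto simp: u_def v_def)
  have m': "m = 1 / (u * v)" by (simp add: m u_def v_def real_sqrt_mult)
  have "1 + m = (1 + u * v) / (u * v)" "1 + x * m * y = 1 + u * v"
       "1 + m * y = (u + v) / u" "1 + x * m = (u + v) / v"
    using uv unfolding m' x y by (simp_all add: field_simps)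
  then have "(1 + m) * (1 + x * m * y) / ((1 + m * y) * (1 + x * m)) = ((1 + u * v) / (u + v))\<^sup>2"
    using uv by (simp add: power2_eq_square)
  then show ?thesis by (simp add: Phi_def u_def v_def real_sqrt_mult)
qed

lemma cross_ratio_F_mult_mat2:
  assumes "pos_matrix A" and "m > 0" and "y > 0"
  shows "cross_ratio_F (A ** mat2 (A$1$2) (A$1$2) (A$1$1 * m) (A$1$1 * m * y))
    = (1 + m) * (1 + cross_ratio_F A * m * y) / ((1 + m * y) * (1 + cross_ratio_F A * m))"
proof -
  obtain a b c d where A: "A$1$1 = a" "A$1$2 = b" "A$2$1 = c" "A$2$2 = d"
    and pos: "a > 0" "b > 0" "c > 0" "d > 0"
    using assms(1) by (auto simp: pos_matrix_iff)
  have "a * b + b * (a * m) = a * b * (1 + m)" "a * b + b * (a * m * y) = a * b * (1 + m * y)"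
    "c * b + d * (a * m * y) = c * b * (1 + a * d / (b * c) * m * y)"
    "c * b + d * (a * m) = c * b * (1 + a * d / (b * c) * m)"
    using pos by (simp_all add: field_simps)
  then show ?thesis
    using pos by (simp add: A cross_ratio_F_def matrix_matrix_mult_nth_2)
qed

text \<open>The cross ratio of \<open>B\<close> must lie on the same side of \<open>1\<close> as that of \<open>A\<close>,
  so that the two distortions reinforce rather than cancel.\<close>

lemma exists_right_factor_with_distortion_Phi:
  assumes "pos_matrix A" and "\<beta> \<ge> 1"
  shows "\<exists>B. pos_matrix B \<and> distortion B = \<beta> \<and> distortion (A ** B) = Phi (distortion A) \<beta>"
proof -
  define \<alpha> x where "\<alpha> = distortion A" and "x = cross_ratio_F A"
  have \<alpha>: "\<alpha> \<ge> 1" and x: "x > 0"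
    using assms by (simp_all add: \<alpha>_def x_def distortion_ge_1 cross_ratio_F_pos)
  have x_cases: "x = \<alpha> \<or> x = 1 / \<alpha>"
    using distortion_eq_iff[OF assms(1) \<alpha>] by (simp add: \<alpha>_def x_def)
  define y where "y = (if x = \<alpha> then \<beta> else 1 / \<beta>)"
  define m where "m = 1 / sqrt (x * y)"
  have y: "y > 0" and m: "m > 0" using x assms(2) by (simp_all add: y_def m_def)
  define B where "B = mat2 (A$1$2) (A$1$2) (A$1$1 * m) (A$1$1 * m * y)"
  have pos_B: "pos_matrix B"
    using assms(1) m y by (simp add: B_def pos_matrix_iff)
  have "cross_ratio_F B = y"
    using assms(1) m by (simp add: B_def cross_ratio_F_def pos_matrix_iff)
  then have "distortion B = \<beta>"
    using distortion_eq_iff[OF pos_B assms(2)] by (simp add: y_def)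
  moreover have "cross_ratio_F (A ** B) = Phi \<alpha> \<beta>"
  proof -
    have "cross_ratio_F (A ** B) = Phi x y"
      using cross_ratio_F_mult_mat2[OF assms(1) m y] Phi_eq_cross_ratio_at_optimum[OF x y m_def]
      by (simp add: B_def x_def)
    also have "\<dots> = Phi \<alpha> \<beta>"
      using x_cases \<alpha> assms(2) Phi_inverse[of \<alpha> \<beta>] by (auto simp: y_def)
    finally show ?thesis .
  qed
  then have "distortion (A ** B) = Phi \<alpha> \<beta>"
    using Phi_ge_1[OF \<alpha> assms(2)] max_inverse_eq_iff[of "Phi \<alpha> \<beta>" "Phi \<alpha> \<beta>"]
    by (simp add: distortion_def)
  ultimately show ?thesis using pos_B by (auto simp: \<alpha>_def)
qed

theorem mainTheorem3:
  fixes \<alpha> \<beta> :: real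
  assumes "\<alpha> \<ge> 1" and "\<beta> \<ge> 1"
  shows "(\<forall>A. pos_matrix A \<and> distortion A = \<alpha> \<longrightarrow>
            (\<exists>B. pos_matrix B \<and> distortion B = \<beta> \<and> distortion (A ** B) = Phi \<alpha> \<beta>))
       \<and> (\<forall>B. pos_matrix B \<and> distortion B = \<beta> \<longrightarrow>
            (\<exists>A. pos_matrix A \<and> distortion A = \<alpha> \<and> distortion (A ** B) = Phi \<alpha> \<beta>))"
proof (intro conjI allI impI)
  fix A assume "pos_matrix A \<and> distortion A = \<alpha>"
  then show "\<exists>B. pos_matrix B \<and> distortion B = \<beta> \<and> distortion (A ** B) = Phi \<alpha> \<beta>"
    using exists_right_factor_with_distortion_Phi[OF _ assms(2)] by blast
next
  fix B assume B: "pos_matrix B \<and> distortion B = \<beta>"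
  then obtain A' where A': "pos_matrix A'" "distortion A' = \<alpha>"
    "distortion (transpose B ** A') = Phi \<beta> \<alpha>"
    using exists_right_factor_with_distortion_Phi[of "transpose B" \<alpha>] assms(1) by auto
  have "transpose A' ** B = transpose (transpose B ** A')"
    by (simp add: matrix_transpose_mul)
  then have "distortion (transpose A' ** B) = Phi \<alpha> \<beta>"
    using A'(3) by (simp add: Phi_commute)
  then show "\<exists>A. pos_matrix A \<and> distortion A = \<alpha> \<and> distortion (A ** B) = Phi \<alpha> \<beta>"
    using A'(1,2) by (intro exI[of _ "transpose A'"]) simp
qed

end
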